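(* Let $L>0$, $D\subseteq\mathbb{R}$ compact, and let $w$ be a null sequence. Let $\mathcal{M}_w$ be a set of filters of the form $M_h^T$, where $T$ is a convergent input-dependent CPTP map on some number $n$ of qubits and $h:\mathcal{D}(\mathbb{C}^{2^n})\to\mathbb{R}$, each of which is a $w$-fading memory filter, and let $\mathcal{F}_w$ be the family of corresponding $w$-fading memory functionals $F_h^T$ on $K_L^-(D)$. If $\mathcal{F}_w$ is a (polynomial) subalgebra of $C(K_L^-(D),\|\cdot\|_w)$ (closed under sums, real scalar multiples and products), contains the constant functionals, and separates points of $K_L^-(D)$, then $\mathcal{F}_w$ is dense in $C(K_L^-(D),\|\cdot\|_w)$ (with respect to the supremum norm). That is, for any $w$-fading memory (time-invariant, causal) filter $M_*:K_L(D)\to\mathbb{R}^{\mathbb{Z}}$ and any $\epsilon>0$, there exists $M_h^T\in\mathcal{M}_w$ such that for all $u\in K_L(D)$, $\sup_{k\in\mathbb{Z}}|M_*(u)_k-M_h^T(u)_k|<\epsilon$.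
   Context: $K_L(D)$: real sequences $u=\{u_k\}_{k\in\mathbb{Z}}$ with $u_k\in D\cap[-L,L]$; $K_L^-(D)$: such sequences indexed by $\mathbb{Z}^-=\{\dots,-1,0\}$. An input-dependent CPTP map $T$ on $n$ qubits assigns to each $x\in D\cap[-L,L]$ a CPTP map $T(x)$ on $2^n\times2^n$ matrices; it is convergent w.r.t. $K_L(D)$ if there is $\delta_k\to0$ such that for every input $\{u_k\}_{k\ge1}$ in $D\cap[-L,L]$ and any two density-operator sequences with $\rho_{j,k}=T(u_k)\rho_{j,k-1}$, $\|\rho_{1,k}-\rho_{2,k}\|_2\le\delta_k$ (Schatten 2-norm). The induced filter is $M_h^T(u)_k=h\big(\lim_{N\to\infty}T(u_k)T(u_{k-1})\cdots T(u_{k-N})\rho_{-N}\big)$, assumed independent of the initial density operators. A filter $M:K_L(D)\to\mathbb{R}^{\mathbb{Z}}$ is causal if $M(u)_k=M(v)_k$ whenever $u_j=v_j$ for all $j\le k$, and time-invariant if it commutes with the shifts $(M_\tau u)_k=u_{k-\tau}$. Its corresponding functional is $F(u_-)=M(u)_0$ for $u_-\in K_L^-(D)$ and any $u\in K_L(D)$ agreeing with $u_-$ on $\mathbb{Z}^-$; the filter is recovered by $M(u)_k=F(P\circ M_{-k}(u))$, with $P$ truncation to indices $\le0$. A null sequence is a decreasing $w:\{0,1,2,\dots\}\to(0,1]$ with $w_k\to0$; the weighted norm is $\|u\|_w=\sup_{k\in\mathbb{Z}^-}|u_k|w_{-k}$. A time-invariant causal filter is $w$-fading memory iff its functional is continuous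 on $(K_L^-(D),\|\cdot\|_w)$; $C(K_L^-(D),\|\cdot\|_w)$ denotes the real-valued continuous functionals on this space. *)

theory Defs
  imports "HOL-Analysis.Analysis" "Jordan_Normal_Form.Matrix"
begin

definition mtrace :: "complex mat \<Rightarrow> complex" where
  "mtrace A = (\<Sum>i<dim_row A. A $$ (i,i))"

definition psd :: "nat \<Rightarrow> complex mat \<Rightarrow> bool" where
  "psd d A \<longleftrightarrow> A \<in> carrier_mat d d \<and>
     (\<forall>v :: nat \<Rightarrow> complex. let q = (\<Sum>i<d. \<Sum>j<d. cnj (v i) * A $$ (i,j) * v j) in Im q = 0 \<and> Re q \<ge> 0)"

definition density :: "nat \<Rightarrow> complex mat \<Rightarrow> bool" where
  "density n \<rho> \<longleftrightarrow> psd (2^n) \<rho> \<and> mtrace \<rho> = 1"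

definition schatten2 :: "complex mat \<Rightarrow> real" where
  "schatten2 A = sqrt (\<Sum>i<dim_row A. \<Sum>j<dim_col A. (cmod (A $$ (i,j)))\<^sup>2)"

text \<open>Action of (id_k tensor Phi) on a (k d) x (k d) matrix viewed as k x k blocks of size d x d.\<close>
definition ampliate :: "nat \<Rightarrow> nat \<Rightarrow> (complex mat \<Rightarrow> complex mat) \<Rightarrow> complex mat \<Rightarrow> complex mat" where
  "ampliate d k \<Phi> X = mat (k*d) (k*d) (\<lambda>(i,j).
      \<Phi> (mat d d (\<lambda>(r,s). X $$ ((i div d)*d + r, (j div d)*d + s))) $$ (i mod d, j mod d))"

definition CPTP :: "nat \<Rightarrow> (complex mat \<Rightarrow> complex mat) \<Rightarrow> bool" where
  "CPTP d \<Phi> \<longleftrightarrow>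
     (\<forall>A \<in> carrier_mat d d. \<Phi> A \<in> carrier_mat d d) \<and>
     (\<forall>A \<in> carrier_mat d d. \<forall>B \<in> carrier_mat d d. \<Phi> (A + B) = \<Phi> A + \<Phi> B) \<and>
     (\<forall>A \<in> carrier_mat d d. \<forall>c::complex. \<Phi> (c \<cdot>\<^sub>m A) = c \<cdot>\<^sub>m \<Phi> A) \<and>
     (\<forall>A \<in> carrier_mat d d. mtrace (\<Phi> A) = mtrace A) \<and>
     (\<forall>k. \<forall>X. psd (k*d) X \<longrightarrow> psd (k*d) (ampliate d k \<Phi> X))"

definition K :: "real set \<Rightarrow> real \<Rightarrow> (int \<Rightarrow> real) set" where
  "K D L = {u. \<forall>k. u k \<in> D \<inter> {-L..L}}"

text \<open>Left-infinite sequences, indexed by the nonpositive integers; by convention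
  they are extended by 0 on the positive integers.\<close>
definition Kminus :: "real set \<Rightarrow> real \<Rightarrow> (int \<Rightarrow> real) set" where
  "Kminus D L = {u. (\<forall>k\<le>0. u k \<in> D \<inter> {-L..L}) \<and> (\<forall>k>0. u k = 0)}"

definition null_seq :: "(nat \<Rightarrow> real) \<Rightarrow> bool" where
  "null_seq w \<longleftrightarrow> (\<forall>k. w (Suc k) \<le> w k) \<and> (\<forall>k. 0 < w k \<and> w k \<le> 1) \<and> w \<longlonglongrightarrow> 0"

definition wnorm :: "(nat \<Rightarrow> real) \<Rightarrow> (int \<Rightarrow> real) \<Rightarrow> real" where
  "wnorm w u = (SUP k\<in>{..0::int}. \<bar>u k\<bar> * w (nat (- k)))"

definition wcont :: "real set \<Rightarrow> real \<Rightarrow> (nat \<Rightarrow> real) \<Rightarrow> ((int \<Rightarrow> real) \<Rightarrow> real) \<Rightarrow> bool" where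
  "wcont D L w F \<longleftrightarrow> (\<forall>u \<in> Kminus D L. \<forall>\<epsilon>>0. \<exists>\<delta>>0. \<forall>v \<in> Kminus D L.
      wnorm w (\<lambda>k. u k - v k) < \<delta> \<longrightarrow> \<bar>F u - F v\<bar> < \<epsilon>)"

definition shift :: "int \<Rightarrow> (int \<Rightarrow> real) \<Rightarrow> (int \<Rightarrow> real)" where
  "shift \<tau> u = (\<lambda>k. u (k - \<tau>))"

definition causal :: "real set \<Rightarrow> real \<Rightarrow> ((int \<Rightarrow> real) \<Rightarrow> (int \<Rightarrow> real)) \<Rightarrow> bool" where
  "causal D L M \<longleftrightarrow> (\<forall>u \<in> K D L. \<forall>v \<in> K D L. \<forall>k.
      (\<forall>j\<le>k. u j = v j) \<longrightarrow> M u k = M v k)"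

definition time_invariant :: "real set \<Rightarrow> real \<Rightarrow> ((int \<Rightarrow> real) \<Rightarrow> (int \<Rightarrow> real)) \<Rightarrow> bool" where
  "time_invariant D L M \<longleftrightarrow> (\<forall>u \<in> K D L. \<forall>\<tau>. M (shift \<tau> u) = shift \<tau> (M u))"

text \<open>Corresponding functional: F(u_-) = M(u)_0 for any u in K_L(D) extending u_-
  (here: extended by a fixed element of D \<inter> [-L,L] on positive indices).\<close>
definition functional :: "real set \<Rightarrow> real \<Rightarrow> ((int \<Rightarrow> real) \<Rightarrow> (int \<Rightarrow> real)) \<Rightarrow> (int \<Rightarrow> real) \<Rightarrow> real" where
  "functional D L M v = M (\<lambda>k. if k \<le> 0 then v k else (SOME x. x \<in> D \<inter> {-L..L})) 0"

definition fading_memory :: "real set \<Rightarrow> real \<Rightarrow> (nat \<Rightarrow> real) \<Rightarrow> ((int \<Rightarrow> real) \<Rightarrow> (int \<Rightarrow> real)) \<Rightarrow> bool" where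
  "fading_memory D L w M \<longleftrightarrow> time_invariant D L M \<and> causal D L M \<and> wcont D L w (functional D L M)"

definition input_CPTP :: "nat \<Rightarrow> real set \<Rightarrow> real \<Rightarrow> (real \<Rightarrow> complex mat \<Rightarrow> complex mat) \<Rightarrow> bool" where
  "input_CPTP n D L T \<longleftrightarrow> (\<forall>x \<in> D \<inter> {-L..L}. CPTP (2^n) (T x))"

definition convergent_CPTP :: "nat \<Rightarrow> real set \<Rightarrow> real \<Rightarrow> (real \<Rightarrow> complex mat \<Rightarrow> complex mat) \<Rightarrow> bool" where
  "convergent_CPTP n D L T \<longleftrightarrow> (\<exists>\<delta>::nat \<Rightarrow> real. \<delta> \<longlonglongrightarrow> 0 \<and>
     (\<forall>u::nat \<Rightarrow> real. \<forall>\<rho>1 \<rho>2 :: nat \<Rightarrow> complex mat.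
        (\<forall>k\<ge>1. u k \<in> D \<inter> {-L..L}) \<and>
        (\<forall>k. density n (\<rho>1 k) \<and> density n (\<rho>2 k)) \<and>
        (\<forall>k\<ge>1. \<rho>1 k = T (u k) (\<rho>1 (k - 1)) \<and> \<rho>2 k = T (u k) (\<rho>2 (k - 1)))
        \<longrightarrow> (\<forall>k. schatten2 (\<rho>1 k - \<rho>2 k) \<le> \<delta> k)))"

text \<open>chain T u k N \<rho> = T(u_k) T(u_(k-1)) ... T(u_(k-N)) \<rho>.\<close>
fun chain :: "(real \<Rightarrow> complex mat \<Rightarrow> complex mat) \<Rightarrow> (int \<Rightarrow> real) \<Rightarrow> int \<Rightarrow> nat \<Rightarrow> complex mat \<Rightarrow> complex mat" where
  "chain T u k 0 \<rho> = T (u k) \<rho>"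
| "chain T u k (Suc N) \<rho> = chain T u k N (T (u (k - int N - 1)) \<rho>)"

definition mat_tendsto :: "nat \<Rightarrow> (nat \<Rightarrow> complex mat) \<Rightarrow> complex mat \<Rightarrow> bool" where
  "mat_tendsto d A \<Lambda> \<longleftrightarrow> \<Lambda> \<in> carrier_mat d d \<and> (\<lambda>N. schatten2 (A N - \<Lambda>)) \<longlonglongrightarrow> 0"

text \<open>The limit  lim_N T(u_k)...T(u_(k-N)) \<rho>_(-N)  (for density operators \<rho>_(-N)).\<close>
definition limit_state :: "nat \<Rightarrow> (real \<Rightarrow> complex mat \<Rightarrow> complex mat) \<Rightarrow> (int \<Rightarrow> real) \<Rightarrow> int \<Rightarrow> complex mat \<Rightarrow> bool" where
  "limit_state n T u k \<Lambda> \<longleftrightarrow> (\<forall>\<rho>::nat \<Rightarrow> complex mat. (\<forall>N. density n (\<rho> N)) \<longrightarrow>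
      mat_tendsto (2^n) (\<lambda>N. chain T u k N (\<rho> N)) \<Lambda>)"

text \<open>Standing assumption: the limit exists and is independent of the initial density operators.\<close>
definition filter_well_defined :: "nat \<Rightarrow> real set \<Rightarrow> real \<Rightarrow> (real \<Rightarrow> complex mat \<Rightarrow> complex mat) \<Rightarrow> bool" where
  "filter_well_defined n D L T \<longleftrightarrow> (\<forall>u \<in> K D L. \<forall>k. \<exists>\<Lambda>. limit_state n T u k \<Lambda>)"

definition qfilter :: "nat \<Rightarrow> (real \<Rightarrow> complex mat \<Rightarrow> complex mat) \<Rightarrow> (complex mat \<Rightarrow> real) \<Rightarrow> (int \<Rightarrow> real) \<Rightarrow> (int \<Rightarrow> real)" where
  "qfilter n T h u k = h (THE \<Lambda>. limit_state n T u k \<Lambda>)"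

end

theory Submission
  imports Defs
begin

text \<open>The weighted norm and the product topology induce the same topology on the bounded set K_L^-(D):
  since w_k \<rightarrow> 0, the weighted distance of two inputs is controlled by finitely many
  coordinates, so w-continuity implies continuity for the product topology, in which
  K_L^-(D) is compact by Tychonoff. The Stone-Weierstrass theorem then gives uniform
  density of the functionals, and time invariance with causality transfers this to the filters,
  because M(u)_k is the functional evaluated at the past of u shifted to time 0.\<close>

lemma Stone_Weierstrass_on:
  fixes A :: "('a::t2_space \<Rightarrow> real) set"
  assumes "compact S"
    and cont: "\<forall>F\<in>A. continuous_on S F"
    and add: "\<forall>F\<in>A. \<forall>G\<in>A. \<exists>H\<in>A. \<forall>x\<in>S. H x = F x + G x"
    and mult: "\<forall>F\<in>A. \<forall>G\<in>A. \<exists>H\<in>A. \<forall>x\<in>S. H x = F x * G x"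
    and const: "\<forall>c. \<exists>H\<in>A. \<forall>x\<in>S. H x = c"
    and separates: "\<forall>x\<in>S. \<forall>y\<in>S. x \<noteq> y \<longrightarrow> (\<exists>F\<in>A. F x \<noteq> F y)"
    and f: "continuous_on S f" and "e > 0"
  shows "\<exists>G\<in>A. \<forall>x\<in>S. \<bar>f x - G x\<bar> < e"
proof -
  define R where "R = {g. \<exists>G\<in>A. \<forall>x\<in>S. g x = G x}"
  have R_I: "g \<in> R" if "G \<in> A" "\<forall>x\<in>S. g x = G x" for g G
    using that unfolding R_def by blast
  interpret function_ring_on R S
  proof
    fix g assume "g \<in> R"
    then obtain G where "G \<in> A" "\<forall>x\<in>S. g x = G x" unfolding R_def by blast
    then show "continuous_on S g" using cont continuous_on_cong by fastforce
  next
    fix g g' assume "g \<in> R" "g' \<in> R"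
    then obtain G G' where "G \<in> A" "G' \<in> A" and "\<forall>x\<in>S. g x = G x" "\<forall>x\<in>S. g' x = G' x"
      unfolding R_def by blast
    moreover obtain Hsum Hprod where "Hsum \<in> A" "\<forall>x\<in>S. Hsum x = G x + G' x"
      and "Hprod \<in> A" "\<forall>x\<in>S. Hprod x = G x * G' x"
      using add mult \<open>G \<in> A\<close> \<open>G' \<in> A\<close> by blast
    ultimately show "(\<lambda>x. g x + g' x) \<in> R" "(\<lambda>x. g x * g' x) \<in> R"
      by (simp_all add: R_I)
  next
    show "(\<lambda>_. c) \<in> R" for c using const R_I by metis
  next
    fix x y assume "x \<in> S" "y \<in> S" "x \<noteq> y"
    then show "\<exists>g\<in>R. g x \<noteq> g y" using separates unfolding R_def by blast
  qed (fact \<open>compact S\<close>)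
  obtain g where "g \<in> R" "\<forall>x\<in>S. \<bar>f x - g x\<bar> < e"
    using Stone_Weierstrass_basic[OF f \<open>e > 0\<close>] by blast
  then show ?thesis unfolding R_def by fastforce
qed

lemma Kminus_eq_PiE:
  "Kminus D L = PiE UNIV (\<lambda>k::int. if k \<le> 0 then D \<inter> {-L..L} else {0})"
  unfolding Kminus_def PiE_UNIV_domain Pi_iff set_eq_iff mem_Collect_eq
  by (metis UNIV_I insertCI not_le singletonD)

lemma compact_Kminus:
  assumes "compact D"
  shows "compact (Kminus D L)"
proof -
  have "compactin euclidean (if k \<le> 0 then D \<inter> {-L..L} else {0})" for k :: int
    using assms by (simp add: compactin_euclidean_iff compact_Int_closed)
  then have "compactin (product_topology (\<lambda>_. euclidean) UNIV)
      (PiE UNIV (\<lambda>k::int. if k \<le> 0 then D \<inter> {-L..L} else {0::real}))"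
    by (simp add: compactin_PiE)
  then show ?thesis
    unfolding Kminus_eq_PiE euclidean_product_topology compactin_euclidean_iff .
qed

lemma wnorm_le_window:
  fixes x :: "int \<Rightarrow> real"
  assumes "decseq w" and w_bounds: "\<forall>k. 0 \<le> w k \<and> w k \<le> 1"
    and near: "\<forall>k\<in>{-int N..0}. \<bar>x k\<bar> \<le> r"
    and far: "\<forall>k\<le>0. \<bar>x k\<bar> \<le> B" and tail: "B * w N \<le> r"
  shows "wnorm w x \<le> r"
  unfolding wnorm_def
proof (rule cSUP_least)
  fix k :: int assume k: "k \<in> {..0}"
  show "\<bar>x k\<bar> * w (nat (- k)) \<le> r"
  proof (cases "k \<ge> - int N")
    case True
    then have "\<bar>x k\<bar> * w (nat (- k)) \<le> \<bar>x k\<bar>"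
      using w_bounds by (simp add: mult_left_le)
    also have "\<dots> \<le> r" using near k True by auto
    finally show ?thesis .
  next
    case False
    then have "w (nat (- k)) \<le> w N" using \<open>decseq w\<close> by (simp add: decseqD)
    then have "\<bar>x k\<bar> * w (nat (- k)) \<le> B * w N"
      using far k w_bounds by (intro mult_mono) auto
    then show ?thesis using tail by linarith
  qed
qed simp

lemma wcont_imp_continuous_on:
  assumes "null_seq w" and "L > 0" and "wcont D L w F"
  shows "continuous_on (Kminus D L) F"
  unfolding continuous_on_def
proof (intro ballI tendstoI)
  fix u e assume u: "u \<in> Kminus D L" and "e > (0::real)"
  then obtain \<delta> where "\<delta> > 0"
    and \<delta>: "\<forall>v\<in>Kminus D L. wnorm w (\<lambda>k. u k - v k) < \<delta> \<longrightarrow> \<bar>F u - F v\<bar> < e"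
    using \<open>wcont D L w F\<close> unfolding wcont_def by blast
  have "decseq w" and w_bounds: "\<forall>k. 0 \<le> w k \<and> w k \<le> 1" and "w \<longlonglongrightarrow> 0"
    using \<open>null_seq w\<close> unfolding null_seq_def by (auto simp: decseq_SucI less_imp_le)
  moreover have "\<delta> / (4 * L) > 0" using \<open>\<delta> > 0\<close> \<open>L > 0\<close> by simp
  ultimately obtain N where N: "w N < \<delta> / (4 * L)"
    using order_tendstoD(2) eventually_sequentially by (metis order_refl)
  define U where "U = (\<Inter>k\<in>{-int N..0}. (\<lambda>v. v k) -` ball (u k) (\<delta> / 2))"
  have "open U"
    unfolding U_def by (intro open_INT finite_atLeastAtMost_int ballI open_vimage open_ball
        continuous_on_product_coordinates)
  moreover have "u \<in> U" using \<open>\<delta> > 0\<close> by (simp add: U_def)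
  moreover have "dist (F v) (F u) < e" if "v \<in> U" "v \<in> Kminus D L" for v
  proof -
    have "\<forall>k\<in>{-int N..0}. \<bar>u k - v k\<bar> \<le> \<delta> / 2"
      using \<open>v \<in> U\<close> by (auto simp: U_def dist_real_def less_imp_le)
    moreover have "\<forall>k\<le>0. \<bar>u k - v k\<bar> \<le> 2 * L"
      using u \<open>v \<in> Kminus D L\<close> unfolding Kminus_def by fastforce
    moreover have "2 * L * w N \<le> \<delta> / 2"
      using N \<open>L > 0\<close> by (simp add: field_simps)
    ultimately have "wnorm w (\<lambda>k. u k - v k) \<le> \<delta> / 2"
      by (intro wnorm_le_window[OF \<open>decseq w\<close> w_bounds])
    then have "\<bar>F u - F v\<bar> < e" using \<delta> \<open>\<delta> > 0\<close> \<open>v \<in> Kminus D L\<close> by simp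
    then show ?thesis by (simp add: dist_real_def abs_minus_commute)
  qed
  ultimately show "\<forall>\<^sub>F v in at u within Kminus D L. dist (F v) (F u) < e"
    unfolding eventually_at_topological by blast
qed

definition past_at :: "int \<Rightarrow> (int \<Rightarrow> real) \<Rightarrow> (int \<Rightarrow> real)" where
  "past_at k u = (\<lambda>j. if j \<le> 0 then u (j + k) else 0)"

lemma past_at_in_Kminus: "u \<in> K D L \<Longrightarrow> past_at k u \<in> Kminus D L"
  unfolding past_at_def K_def Kminus_def by auto

lemma filter_eq_functional_past_at:
  assumes "time_invariant D L M" and "causal D L M" and u: "u \<in> K D L"
  shows "M u k = functional D L M (past_at k u)"
proof -
  define x0 where "x0 = (SOME x. x \<in> D \<inter> {-L..L})"
  have "x0 \<in> D \<inter> {-L..L}"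
    unfolding x0_def using u by (metis K_def mem_Collect_eq someI)
  define u' where "u' = (\<lambda>j::int. if j \<le> 0 then u (j + k) else x0)"
  have "shift (-k) u = (\<lambda>j. u (j + k))" by (simp add: shift_def)
  then have "M u k = M (\<lambda>j. u (j + k)) 0"
    using assms(1) u unfolding time_invariant_def by (metis add.inverse_inverse diff_0 shift_def)
  also have "\<dots> = M u' 0"
    using \<open>causal D L M\<close> u \<open>x0 \<in> D \<inter> {-L..L}\<close> unfolding causal_def K_def u'_def by auto
  also have "\<dots> = functional D L M (past_at k u)"
    unfolding functional_def past_at_def u'_def x0_def by (simp cong: if_cong)
  finally show ?thesis .
qed

lemma filter_dist_le_functional_dist:
  assumes "time_invariant D L M" "causal D L M" "time_invariant D L M'" "causal D L M'"
    and close: "\<forall>v\<in>Kminus D L. \<bar>functional D L M v - functional D L M' v\<bar> \<le> c"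
    and u: "u \<in> K D L"
  shows "\<bar>M u k - M' u k\<bar> \<le> c"
  using close past_at_in_Kminus[OF u] filter_eq_functional_past_at[OF assms(1,2) u]
    filter_eq_functional_past_at[OF assms(3,4) u] by simp

theorem theorem3:
  fixes D :: "real set" and L :: real and w :: "nat \<Rightarrow> real"
    and Fw :: "((int \<Rightarrow> real) \<Rightarrow> real) set"
    and \<M> :: "(nat \<times> (real \<Rightarrow> complex mat \<Rightarrow> complex mat) \<times> (complex mat \<Rightarrow> real)) set"
  assumes L_pos: "L > 0"
    and D_compact: "compact D"
    and w_null: "null_seq w"
    and family: "\<forall>(n, T, h) \<in> \<M>. input_CPTP n D L T \<and> convergent_CPTP n D L T \<and>
                    filter_well_defined n D L T \<and> fading_memory D L w (qfilter n T h)"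
    and Fw_def: "Fw = (\<lambda>(n, T, h). functional D L (qfilter n T h)) ` \<M>"
    and sums: "\<forall>F \<in> Fw. \<forall>G \<in> Fw. \<exists>H \<in> Fw. \<forall>v \<in> Kminus D L. H v = F v + G v"
    and scal: "\<forall>F \<in> Fw. \<forall>c::real. \<exists>H \<in> Fw. \<forall>v \<in> Kminus D L. H v = c * F v"
    and prods: "\<forall>F \<in> Fw. \<forall>G \<in> Fw. \<exists>H \<in> Fw. \<forall>v \<in> Kminus D L. H v = F v * G v"
    and constants: "\<forall>c::real. \<exists>H \<in> Fw. \<forall>v \<in> Kminus D L. H v = c"
    and separates: "\<forall>v \<in> Kminus D L. \<forall>v' \<in> Kminus D L. v \<noteq> v' \<longrightarrow> (\<exists>F \<in> Fw. F v \<noteq> F v')"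
  shows "(\<forall>F. wcont D L w F \<longrightarrow> (\<forall>\<epsilon>>0. \<exists>G \<in> Fw.
            \<exists>c < \<epsilon>. \<forall>v \<in> Kminus D L. \<bar>F v - G v\<bar> \<le> c))
       \<and> (\<forall>Mstar. fading_memory D L w Mstar \<longrightarrow> (\<forall>\<epsilon>>0. \<exists>(n, T, h) \<in> \<M>.
            \<forall>u \<in> K D L. \<exists>c < \<epsilon>. \<forall>k. \<bar>Mstar u k - qfilter n T h u k\<bar> \<le> c))"
proof -
  have Fw_continuous: "\<forall>G\<in>Fw. continuous_on (Kminus D L) G"
    using family w_null L_pos unfolding Fw_def fading_memory_def
    by (auto intro: wcont_imp_continuous_on)
  have approx: "\<exists>G\<in>Fw. \<forall>v\<in>Kminus D L. \<bar>F v - G v\<bar> \<le> \<epsilon> / 2"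
    if "wcont D L w F" "\<epsilon> > 0" for F \<epsilon>
    using Stone_Weierstrass_on[OF compact_Kminus[OF D_compact] Fw_continuous sums prods
        constants separates wcont_imp_continuous_on[OF w_null L_pos that(1)], of "\<epsilon> / 2"]
      that(2) by (meson half_gt_zero less_imp_le)
  show ?thesis
  proof (intro conjI allI impI)
    fix F and \<epsilon> :: real assume "wcont D L w F" "\<epsilon> > 0"
    moreover have "\<epsilon> / 2 < \<epsilon>" using \<open>\<epsilon> > 0\<close> by simp
    ultimately show "\<exists>G\<in>Fw. \<exists>c<\<epsilon>. \<forall>v\<in>Kminus D L. \<bar>F v - G v\<bar> \<le> c"
      using approx by blast
  next
    fix Mstar and \<epsilon> :: real assume fm: "fading_memory D L w Mstar" and "\<epsilon> > 0"
    then obtain G where "G \<in> Fw"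
      and "\<forall>v\<in>Kminus D L. \<bar>functional D L Mstar v - G v\<bar> \<le> \<epsilon> / 2"
      using approx unfolding fading_memory_def by blast
    then obtain n T h where nTh: "(n, T, h) \<in> \<M>"
      and close: "\<forall>v\<in>Kminus D L. \<bar>functional D L Mstar v - functional D L (qfilter n T h) v\<bar> \<le> \<epsilon> / 2"
      unfolding Fw_def by auto
    then have "\<bar>Mstar u k - qfilter n T h u k\<bar> \<le> \<epsilon> / 2" if "u \<in> K D L" for u k
      using filter_dist_le_functional_dist[OF _ _ _ _ close that] fm family
      unfolding fading_memory_def by auto
    moreover have "\<epsilon> / 2 < \<epsilon>" using \<open>\<epsilon> > 0\<close> by simp
    ultimately show "\<exists>(n, T, h)\<in>\<M>. \<forall>u\<in>K D L. \<exists>c<\<epsilon>. \<forall>k. \<bar>Mstar u k - qfilter n T h u k\<bar> \<le> c"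
      using nTh by blast
  qed
qed

end
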